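(* Let $T>0$, $n\ge 1$, $\Delta=T/n$, $t_i=i\Delta$ and $\mathbb{S}_i=(t_{i-1},t_i]$ for $i=1,\dots,n$. Let $W$ be a standard Wiener process and let $X$ be the process with $X(0)=X_0$ which on each interval $\mathbb{S}_i$ evolves as $dX(t)=\mu_i\,dt+\sigma_i\,dW(t)$ with constants $\mu_i\in\mathbb{R}$, $\sigma_i>0$. Write $X_i=X(t_i)$ and define the bridges $$Y(t,\mathbb{S}_i)=X(t)-X_{i-1}-\frac{t-t_{i-1}}{\Delta}(X_i-X_{i-1}),\qquad t\in\mathbb{S}_i.$$ Let $Y(t)=W(t)-tW(1)$, $t\in(0,1]$, be the canonical bridge. Consider an estimator $$\hat D_{\rm est}(T)=\sum_{i=1}^n \hat D_{\rm est}\{Y(t,\mathbb{S}_i):t\in\mathbb{S}_i\},$$ where each spot estimator $\hat D_{\rm est}\{Y(t,\mathbb{S}_i):t\in\mathbb{S}_i\}$ is a (fixed, measurable) functional of the bridge path on $\mathbb{S}_i$, and assume the estimator is homogeneous, i.e. for each $i$, $$\hat D_{\rm est}\{Y(t,\mathbb{S}_i):t\in\mathbb{S}_i\}\ \text{has the same law as}\ \sigma_i^2\Delta\cdot \hat d_{\rm est},\qquad \hat d_{\rm est}:=\hat D_{\rm est}\{Y(t):t\in(0,1]\},$$ and unbiased, i.e. $\mathrm{E}[\hat d_{\rm est}]=1$, with $\mathrm{Var}[\hat d_{\rm est}]<\infty$. Define the efficiency (coefficient of variation) $$\rho[\hat D_{\rm est}(T)]=\frac{\sqrt{\mathrm{Var}[\hat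 D_{\rm est}(T)]}}{\mathrm{E}[\hat D_{\rm est}(T)]}.$$ Then its lower bound over all volatilities, $$\rho_{\rm est}(n):=\inf_{\sigma_1>0,\dots,\sigma_n>0}\rho[\hat D_{\rm est}(T)],$$ equals $$\rho_{\rm est}(n)=\sqrt{\mathrm{Var}[\hat d_{\rm est}]/n}.$$
   Context: The setting models, on each time step, the log-price as a Wiener process with constant drift and volatility (the paper's standing approximation of an Itô log-price process $dX=\mu(t)dt+\sigma(t)dW$ on short steps). The bridge on each interval is the log-price minus its linear interpolation between the open value $X_{i-1}$ and close value $X_i$; bridges on distinct intervals are functionals of the Wiener increments on disjoint intervals. *)

theory Defs
  imports "HOL-Probability.Probability"
begin

definition wiener :: "'a measure \<Rightarrow> (real \<Rightarrow> 'a \<Rightarrow> real) \<Rightarrow> bool" where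
  "wiener M W \<longleftrightarrow>
     prob_space M \<and>
     (\<forall>\<omega>\<in>space M. W 0 \<omega> = 0 \<and> continuous_on {0..} (\<lambda>t. W t \<omega>)) \<and>
     (\<forall>s t. 0 \<le> s \<and> s < t \<longrightarrow>
        distributed M lborel (\<lambda>\<omega>. W t \<omega> - W s \<omega>) (normal_density 0 (sqrt (t - s)))) \<and>
     (\<forall>(ts :: nat \<Rightarrow> real) m. 0 \<le> ts 0 \<and> (\<forall>k<m. ts k \<le> ts (Suc k)) \<longrightarrow>
        prob_space.indep_vars M (\<lambda>_. borel) (\<lambda>k \<omega>. W (ts (Suc k)) \<omega> - W (ts k) \<omega>) {..<m})"

definition grid :: "real \<Rightarrow> nat \<Rightarrow> real" where
  "grid \<Delta> i = real i * \<Delta>"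

definition Sint :: "real \<Rightarrow> nat \<Rightarrow> real set" where
  "Sint \<Delta> i = {grid \<Delta> (i - 1) <.. grid \<Delta> i}"

text \<open>Log-price X with X(0) = X0 and dX = mu_j dt + sigma_j dW on S_j (j = 1..n),
  written as the (piecewise constant integrand) integral:
  X(t) = X0 + sum_j mu_j |[0,t] \<inter> S_j| + sigma_j (W(clip_j t) - W(t_{j-1})),
  where clip_j t = max t_{j-1} (min t t_j).\<close>
definition Xproc :: "nat \<Rightarrow> real \<Rightarrow> real \<Rightarrow> (nat \<Rightarrow> real) \<Rightarrow> (nat \<Rightarrow> real)
                    \<Rightarrow> (real \<Rightarrow> 'a \<Rightarrow> real) \<Rightarrow> real \<Rightarrow> 'a \<Rightarrow> real" where
  "Xproc n \<Delta> X0 \<mu> \<sigma> W t \<omega> =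
     X0 + (\<Sum>j\<in>{1..n}.
             \<mu> j * (max (grid \<Delta> (j - 1)) (min t (grid \<Delta> j)) - grid \<Delta> (j - 1))
           + \<sigma> j * (W (max (grid \<Delta> (j - 1)) (min t (grid \<Delta> j))) \<omega> - W (grid \<Delta> (j - 1)) \<omega>))"

definition bridge :: "nat \<Rightarrow> real \<Rightarrow> real \<Rightarrow> (nat \<Rightarrow> real) \<Rightarrow> (nat \<Rightarrow> real)
                    \<Rightarrow> (real \<Rightarrow> 'a \<Rightarrow> real) \<Rightarrow> nat \<Rightarrow> real \<Rightarrow> 'a \<Rightarrow> real" where
  "bridge n \<Delta> X0 \<mu> \<sigma> W i t \<omega> =
     Xproc n \<Delta> X0 \<mu> \<sigma> W t \<omega> - Xproc n \<Delta> X0 \<mu> \<sigma> W (grid \<Delta> (i - 1)) \<omega>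
     - (t - grid \<Delta> (i - 1)) / \<Delta> *
       (Xproc n \<Delta> X0 \<mu> \<sigma> W (grid \<Delta> i) \<omega> - Xproc n \<Delta> X0 \<mu> \<sigma> W (grid \<Delta> (i - 1)) \<omega>)"

definition bridge_path :: "nat \<Rightarrow> real \<Rightarrow> real \<Rightarrow> (nat \<Rightarrow> real) \<Rightarrow> (nat \<Rightarrow> real)
                    \<Rightarrow> (real \<Rightarrow> 'a \<Rightarrow> real) \<Rightarrow> nat \<Rightarrow> 'a \<Rightarrow> real \<Rightarrow> real" where
  "bridge_path n \<Delta> X0 \<mu> \<sigma> W i \<omega> =
     (\<lambda>t. if t \<in> Sint \<Delta> i then bridge n \<Delta> X0 \<mu> \<sigma> W i t \<omega> else 0)"

definition canon_bridge_path :: "(real \<Rightarrow> 'a \<Rightarrow> real) \<Rightarrow> 'a \<Rightarrow> real \<Rightarrow> real" where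
  "canon_bridge_path W \<omega> = (\<lambda>t. if t \<in> {0<..1} then W t \<omega> - t * W 1 \<omega> else 0)"

abbreviation path_space :: "(real \<Rightarrow> real) measure" where
  "path_space \<equiv> Pi\<^sub>M UNIV (\<lambda>_. borel)"

definition spot_est :: "(real \<Rightarrow> real \<Rightarrow> (real \<Rightarrow> real) \<Rightarrow> real) \<Rightarrow> nat \<Rightarrow> real \<Rightarrow> real
      \<Rightarrow> (nat \<Rightarrow> real) \<Rightarrow> (nat \<Rightarrow> real) \<Rightarrow> (real \<Rightarrow> 'a \<Rightarrow> real) \<Rightarrow> nat \<Rightarrow> 'a \<Rightarrow> real" where
  "spot_est Dest n \<Delta> X0 \<mu> \<sigma> W i \<omega> =
     Dest (grid \<Delta> (i - 1)) (grid \<Delta> i) (bridge_path n \<Delta> X0 \<mu> \<sigma> W i \<omega>)"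

definition total_est :: "(real \<Rightarrow> real \<Rightarrow> (real \<Rightarrow> real) \<Rightarrow> real) \<Rightarrow> nat \<Rightarrow> real \<Rightarrow> real
      \<Rightarrow> (nat \<Rightarrow> real) \<Rightarrow> (nat \<Rightarrow> real) \<Rightarrow> (real \<Rightarrow> 'a \<Rightarrow> real) \<Rightarrow> 'a \<Rightarrow> real" where
  "total_est Dest n \<Delta> X0 \<mu> \<sigma> W \<omega> = (\<Sum>i\<in>{1..n}. spot_est Dest n \<Delta> X0 \<mu> \<sigma> W i \<omega>)"

definition canon_est :: "(real \<Rightarrow> real \<Rightarrow> (real \<Rightarrow> real) \<Rightarrow> real) \<Rightarrow> (real \<Rightarrow> 'a \<Rightarrow> real) \<Rightarrow> 'a \<Rightarrow> real" where
  "canon_est Dest W \<omega> = Dest 0 1 (canon_bridge_path W \<omega>)"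

definition expect :: "'a measure \<Rightarrow> ('a \<Rightarrow> real) \<Rightarrow> real" where
  "expect M X = integral\<^sup>L M X"

definition var :: "'a measure \<Rightarrow> ('a \<Rightarrow> real) \<Rightarrow> real" where
  "var M X = integral\<^sup>L M (\<lambda>\<omega>. (X \<omega> - expect M X)\<^sup>2)"

definition coef_var :: "'a measure \<Rightarrow> ('a \<Rightarrow> real) \<Rightarrow> real" where
  "coef_var M X = sqrt (var M X) / expect M X"

end

theory Submission
  imports Defs
begin

text \<open>On a cell the drift enters the log-price linearly and cancels from the bridge, which is
  \<open>\<sigma>\<^sub>i\<close> times the Brownian bridge built from the Wiener increment path started at \<open>t\<^sub>i\<^sub>-\<^sub>1\<close>.
  Increments of \<open>W\<close> over non-overlapping intervals are independent, so the increment paths of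
  distinct cells are independent path-valued random variables, and hence so are the spot
  estimators. By homogeneity the \<open>i\<close>-th spot estimator has mean \<open>c\<^sub>i = \<sigma>\<^sub>i\<^sup>2 \<Delta>\<close> and variance
  \<open>c\<^sub>i\<^sup>2 Var d\<close>, so \<open>\<rho> = sqrt (\<Sum> c\<^sub>i\<^sup>2 Var d) / \<Sum> c\<^sub>i\<close>. Cauchy-Schwarz,
  \<open>(\<Sum> c\<^sub>i)\<^sup>2 \<le> n \<Sum> c\<^sub>i\<^sup>2\<close>, bounds this below by \<open>sqrt (Var d / n)\<close>, with equality for
  constant volatility.\<close>

lemma wiener_prob_space: "wiener M W \<Longrightarrow> prob_space M"
  by (simp add: wiener_def)

lemma wiener_measurable:
  assumes "wiener M W" "0 \<le> s"
  shows "W s \<in> borel_measurable M"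
proof -
  have "(\<lambda>\<omega>. W s \<omega> - W 0 \<omega>) \<in> borel_measurable M"
  proof (cases "s = 0")
    case False
    have incr: "\<forall>s t. 0 \<le> s \<and> s < t \<longrightarrow>
        distributed M lborel (\<lambda>\<omega>. W t \<omega> - W s \<omega>) (normal_density 0 (sqrt (t - s)))"
      using assms(1) unfolding wiener_def by blast
    have "distributed M lborel (\<lambda>\<omega>. W s \<omega> - W 0 \<omega>) (normal_density 0 (sqrt (s - 0)))"
      using assms(2) False by (intro incr[rule_format]) auto
    then have "(\<lambda>\<omega>. W s \<omega> - W 0 \<omega>) \<in> M \<rightarrow>\<^sub>M lborel"
      by (rule distributed_measurable)
    then show ?thesis
      by (simp only: measurable_cong_sets[OF refl sets_lborel])
  qed simp
  moreover have "\<And>\<omega>. \<omega> \<in> space M \<Longrightarrow> W s \<omega> - W 0 \<omega> = W s \<omega>"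
    using assms by (simp add: wiener_def)
  ultimately show ?thesis
    by (subst measurable_cong) auto
qed

lemma finite_strict_mono_enumeration:
  fixes P :: "'a::linorder set"
  assumes "finite P" "P \<noteq> {}"
  obtains ts :: "nat \<Rightarrow> 'a" and m :: nat where "strict_mono_on {..m} ts" "ts ` {..m} = P"
proof
  let ?L = "sorted_list_of_set P"
  have indices: "{..card P - 1} = {..<length ?L}"
    using assms card_gt_0_iff[of P] by auto
  have "sorted_wrt (<) ?L" "set ?L = P"
    using assms by simp_all
  then show "strict_mono_on {..card P - 1} ((!) ?L)" "(!) ?L ` {..card P - 1} = P"
    unfolding indices by (auto simp: strict_mono_on_def sorted_wrt_iff_nth_less set_conv_nth)
qed

definition sigma_of_vars :: "'a measure \<Rightarrow> ('i \<Rightarrow> 'a \<Rightarrow> real) \<Rightarrow> 'i set \<Rightarrow> 'a measure" where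
  "sigma_of_vars M X I = sigma (space M) (\<Union>i\<in>I. {X i -` B \<inter> space M | B. B \<in> sets borel})"

lemma space_sigma_of_vars [simp]: "space (sigma_of_vars M X I) = space M"
  unfolding sigma_of_vars_def by (rule space_measure_of) auto

lemma sets_sigma_of_vars:
  "sets (sigma_of_vars M X I) = sigma_sets (space M) (\<Union>i\<in>I. {X i -` B \<inter> space M | B. B \<in> sets borel})"
  unfolding sigma_of_vars_def by (rule sets_measure_of) auto

lemma measurable_sigma_of_vars:
  assumes "i \<in> I"
  shows "X i \<in> borel_measurable (sigma_of_vars M X I)"
proof (rule measurableI)
  fix B :: "real set" assume "B \<in> sets borel"
  with assms show "X i -` B \<inter> space (sigma_of_vars M X I) \<in> sets (sigma_of_vars M X I)"
    unfolding sets_sigma_of_vars by (intro sigma_sets.Basic) auto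
qed simp

lemma (in prob_space) indep_events_sigma_of_vars:
  assumes indep: "indep_vars (\<lambda>_. borel) X L"
    and disj: "disjoint_family_on I K" and sub: "\<And>j. j \<in> K \<Longrightarrow> I j \<subseteq> L"
    and K: "finite K" "K \<noteq> {}"
    and A: "\<And>j. j \<in> K \<Longrightarrow> A j \<in> sets (sigma_of_vars M X (I j))"
  shows "prob (\<Inter>j\<in>K. A j) = (\<Prod>j\<in>K. prob (A j))"
proof -
  define G where "G k = {X k -` B \<inter> space M | B. B \<in> sets borel}" for k
  have "indep_sets G L"
    using indep by (simp add: indep_vars_def2 G_def[abs_def])
  then have "indep_sets G (\<Union>j\<in>K. I j)"
    by (rule indep_sets_mono_index[rotated]) (use sub in auto)
  moreover have "Int_stable (G k)" for k
    unfolding Int_stable_def G_def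
  proof safe
    fix B B' :: "real set" assume "B \<in> sets borel" "B' \<in> sets borel"
    then show "\<exists>C. X k -` B \<inter> space M \<inter> (X k -` B' \<inter> space M) = X k -` C \<inter> space M \<and> C \<in> sets borel"
      by (intro exI[of _ "B \<inter> B'"]) auto
  qed
  ultimately have "indep_sets (\<lambda>j. sigma_sets (space M) (\<Union>k\<in>I j. G k)) K"
    using disj by (rule indep_sets_collect_sigma)
  then show ?thesis
    using K A by (intro indep_setsD) (auto simp: sets_sigma_of_vars G_def)
qed

lemma wiener_indep_grid_increments:
  assumes "wiener M W" "0 \<le> ts 0" "\<And>k. k < m \<Longrightarrow> ts k \<le> ts (Suc k)"
  shows "prob_space.indep_vars M (\<lambda>_. borel) (\<lambda>k \<omega>. W (ts (Suc k)) \<omega> - W (ts k) \<omega>) {..<m}"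
  using assms unfolding wiener_def by blast

lemma grid_increment_measurable_sigma_of_vars:
  fixes ts :: "nat \<Rightarrow> real" and X :: "real \<Rightarrow> 'a \<Rightarrow> real"
  assumes ts: "strict_mono_on {..m} ts" and "p \<le> q" "q \<le> m" "a \<le> ts p" "ts q \<le> b"
  shows "(\<lambda>\<omega>. X (ts q) \<omega> - X (ts p) \<omega>) \<in> borel_measurable
    (sigma_of_vars M (\<lambda>k \<omega>. X (ts (Suc k)) \<omega> - X (ts k) \<omega>) {k. k < m \<and> a \<le> ts k \<and> ts (Suc k) \<le> b})"
proof -
  have "{p..<q} \<subseteq> {k. k < m \<and> a \<le> ts k \<and> ts (Suc k) \<le> b}"
  proof
    fix k assume k: "k \<in> {p..<q}"
    then have "ts p \<le> ts k" "ts (Suc k) \<le> ts q"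
      using assms strict_mono_on_less_eq[OF ts, of p k] strict_mono_on_less_eq[OF ts, of "Suc k" q] by auto
    with k assms show "k \<in> {k. k < m \<and> a \<le> ts k \<and> ts (Suc k) \<le> b}"
      by auto
  qed
  then have "(\<lambda>\<omega>. \<Sum>k\<in>{p..<q}. X (ts (Suc k)) \<omega> - X (ts k) \<omega>) \<in> borel_measurable
      (sigma_of_vars M (\<lambda>k \<omega>. X (ts (Suc k)) \<omega> - X (ts k) \<omega>) {k. k < m \<and> a \<le> ts k \<and> ts (Suc k) \<le> b})"
    by (auto intro!: borel_measurable_sum measurable_sigma_of_vars[where X = "\<lambda>k \<omega>. X (ts (Suc k)) \<omega> - X (ts k) \<omega>"])
  then show ?thesis
    using sum_Suc_diff'[OF \<open>p \<le> q\<close>, of "\<lambda>k. X (ts k) _"] by simp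
qed

lemma wiener_indep_interval_increments:
  fixes a b :: "'j \<Rightarrow> real" and c :: "'j \<Rightarrow> 't \<Rightarrow> real"
  assumes wien: "wiener M W" and K: "finite K" "K \<noteq> {}"
    and a_nonneg: "\<And>j. j \<in> K \<Longrightarrow> 0 \<le> a j"
    and nonoverlap: "\<And>j k. j \<in> K \<Longrightarrow> k \<in> K \<Longrightarrow> j \<noteq> k \<Longrightarrow> b j \<le> a k \<or> b k \<le> a j"
    and J: "\<And>j. j \<in> K \<Longrightarrow> finite (J j)"
    and c: "\<And>j t. j \<in> K \<Longrightarrow> t \<in> J j \<Longrightarrow> a j \<le> c j t \<and> c j t \<le> b j"
    and E: "\<And>j t. j \<in> K \<Longrightarrow> t \<in> J j \<Longrightarrow> E j t \<in> sets borel"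
  shows "measure M (\<Inter>j\<in>K. {\<omega>\<in>space M. \<forall>t\<in>J j. W (c j t) \<omega> - W (a j) \<omega> \<in> E j t})
       = (\<Prod>j\<in>K. measure M {\<omega>\<in>space M. \<forall>t\<in>J j. W (c j t) \<omega> - W (a j) \<omega> \<in> E j t})"
proof -
  interpret prob_space M
    using wien by (rule wiener_prob_space)
  define P where "P = (\<Union>j\<in>K. insert (a j) (c j ` J j))"
  have "finite P" "P \<noteq> {}"
    using K J by (auto simp: P_def)
  then obtain ts :: "nat \<Rightarrow> real" and m :: nat
    where ts_mono: "strict_mono_on {..m} ts" and ts_P: "ts ` {..m} = P"
    by (rule finite_strict_mono_enumeration)
  have ts_less: "ts k < ts (Suc k)" if "k < m" for k
    using that by (intro strict_mono_onD[OF ts_mono]) auto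
  \<comment> \<open>Each increment over an interval is a sum of steps of the common grid \<open>ts\<close>, and the
    steps lying in distinct non-overlapping intervals form disjoint groups.\<close>
  define D where "D k \<omega> = W (ts (Suc k)) \<omega> - W (ts k) \<omega>" for k \<omega>
  define I where "I j = {k. k < m \<and> a j \<le> ts k \<and> ts (Suc k) \<le> b j}" for j
  have incr_meas: "(\<lambda>\<omega>. W (c j t) \<omega> - W (a j) \<omega>) \<in> borel_measurable (sigma_of_vars M D (I j))"
    if j: "j \<in> K" and t: "t \<in> J j" for j t
  proof -
    have "a j \<in> P" "c j t \<in> P"
      using j t by (auto simp: P_def)
    then obtain p q where p: "p \<le> m" "ts p = a j" and q: "q \<le> m" "ts q = c j t"
      using ts_P by auto
    then have "p \<le> q"
      using strict_mono_on_less_eq[OF ts_mono, of p q] c[OF j t] by simp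
    then show ?thesis
      using grid_increment_measurable_sigma_of_vars[OF ts_mono _ q(1), of p "a j" "b j" W M] p q c[OF j t]
      by (simp add: D_def[abs_def] I_def)
  qed
  have "ts 0 \<in> P"
    using ts_P by auto
  then have "indep_vars (\<lambda>_. borel) D {..<m}"
    unfolding D_def using a_nonneg c ts_less
    by (intro wiener_indep_grid_increments[OF wien]) (force simp: P_def less_imp_le)+
  moreover have "disjoint_family_on I K"
    unfolding disjoint_family_on_def
  proof (intro ballI impI equals0I)
    fix j k l assume jk: "j \<in> K" "k \<in> K" "j \<noteq> k" and "l \<in> I j \<inter> I k"
    then show False
      using nonoverlap[OF jk] ts_less[of l] by (auto simp: I_def)
  qed
  moreover have "{\<omega>\<in>space M. \<forall>t\<in>J j. W (c j t) \<omega> - W (a j) \<omega> \<in> E j t} \<in> sets (sigma_of_vars M D (I j))"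
    if j: "j \<in> K" for j
  proof -
    have "{\<omega>\<in>space M. W (c j t) \<omega> - W (a j) \<omega> \<in> E j t} \<in> sets (sigma_of_vars M D (I j))"
      if t: "t \<in> J j" for t
      using measurable_sets[OF incr_meas[OF j t] E[OF j t]] by (simp add: vimage_def Int_def conj_commute)
    then show ?thesis
      using sets.sets_Collect_finite_All[OF _ J[OF j], of "sigma_of_vars M D (I j)"] by simp
  qed
  ultimately show ?thesis
    using K by (intro indep_events_sigma_of_vars[where I = I]) (auto simp: I_def)
qed

lemma preimage_prod_algebra_cylinder:
  fixes Z :: "'a \<Rightarrow> 't \<Rightarrow> real"
  assumes "g \<in> prod_algebra UNIV (\<lambda>_::'t. borel :: real measure)"
  obtains J E where "finite J" "\<And>t. t \<in> J \<Longrightarrow> E t \<in> sets borel"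
    "Z -` g \<inter> space M = {\<omega>\<in>space M. \<forall>t\<in>J. Z \<omega> t \<in> E t}"
proof -
  from assms obtain J E where "g = prod_emb UNIV (\<lambda>_. borel) J (Pi\<^sub>E J E)" "finite J"
    "\<And>t. t \<in> J \<Longrightarrow> E t \<in> sets borel"
    by (elim prod_algebraE) blast
  then show thesis
    by (intro that[of J E]) (auto simp: prod_emb_iff restrict_PiE_iff Pi_iff)
qed

lemma (in prob_space) indep_vars_path_space_cylinders:
  fixes Z :: "'i \<Rightarrow> 'a \<Rightarrow> 't \<Rightarrow> real"
  assumes meas: "\<And>i. i \<in> I \<Longrightarrow> Z i \<in> M \<rightarrow>\<^sub>M Pi\<^sub>M UNIV (\<lambda>_. borel)"
    and cylinders: "\<And>K J E. K \<subseteq> I \<Longrightarrow> finite K \<Longrightarrow> K \<noteq> {} \<Longrightarrow>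
        (\<And>j. j \<in> K \<Longrightarrow> finite (J j)) \<Longrightarrow>
        (\<And>j t. j \<in> K \<Longrightarrow> t \<in> J j \<Longrightarrow> E j t \<in> sets borel) \<Longrightarrow>
        prob (\<Inter>j\<in>K. {\<omega>\<in>space M. \<forall>t\<in>J j. Z j \<omega> t \<in> E j t})
          = (\<Prod>j\<in>K. prob {\<omega>\<in>space M. \<forall>t\<in>J j. Z j \<omega> t \<in> E j t})"
  shows "indep_vars (\<lambda>_. Pi\<^sub>M UNIV (\<lambda>_. borel)) Z I"
proof -
  let ?G = "prod_algebra UNIV (\<lambda>_::'t. borel :: real measure)"
  define F where "F i = {Z i -` g \<inter> space M | g. g \<in> ?G}" for i
  have space_paths: "(\<Pi>\<^sub>E t\<in>(UNIV::'t set). space (borel :: real measure)) = UNIV"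
    by auto
  have sigma_F: "{Z i -` A \<inter> space M | A. A \<in> sets (Pi\<^sub>M UNIV (\<lambda>_::'t. borel))} = sigma_sets (space M) (F i)"
    for i
    unfolding F_def sets_PiM space_paths by (rule sigma_sets_vimage_commute) simp
  have "Int_stable (F i)" for i
    unfolding Int_stable_def F_def
  proof safe
    fix g g' assume "g \<in> ?G" "g' \<in> ?G"
    then have "g \<inter> g' \<in> ?G"
      using Int_stable_prod_algebra unfolding Int_stable_def by blast
    then show "\<exists>h. Z i -` g \<inter> space M \<inter> (Z i -` g' \<inter> space M) = Z i -` h \<inter> space M \<and> h \<in> ?G"
      by (intro exI[of _ "g \<inter> g'"]) auto
  qed
  moreover have "indep_sets F I"
  proof (rule indep_setsI)
    fix i assume i: "i \<in> I"
    show "F i \<subseteq> events"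
    proof
      fix A assume "A \<in> F i"
      then obtain g where "g \<in> ?G" "A = Z i -` g \<inter> space M"
        by (auto simp: F_def)
      then show "A \<in> events"
        using measurable_sets[OF meas[OF i]] sigma_sets.Basic[of g ?G] by (simp add: sets_PiM)
    qed
  next
    fix A K assume K: "K \<noteq> {}" "K \<subseteq> I" "finite K" and A: "\<forall>j\<in>K. A j \<in> F j"
    have "\<forall>j\<in>K. \<exists>J E. finite J \<and> (\<forall>t\<in>J. E t \<in> sets borel)
        \<and> A j = {\<omega>\<in>space M. \<forall>t\<in>J. Z j \<omega> t \<in> E t}"
    proof
      fix j assume j: "j \<in> K"
      obtain g where "g \<in> ?G" and Ag: "A j = Z j -` g \<inter> space M"
        using A j by (auto simp: F_def)
      from \<open>g \<in> ?G\<close> obtain J' E' where "finite J'" "\<And>t. t \<in> J' \<Longrightarrow> E' t \<in> sets borel"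
        "Z j -` g \<inter> space M = {\<omega>\<in>space M. \<forall>t\<in>J'. Z j \<omega> t \<in> E' t}"
        by (rule preimage_prod_algebra_cylinder[where Z = "Z j" and M = M]) blast
      then show "\<exists>J E. finite J \<and> (\<forall>t\<in>J. E t \<in> sets borel)
          \<and> A j = {\<omega>\<in>space M. \<forall>t\<in>J. Z j \<omega> t \<in> E t}"
        by (intro exI[of _ J'] exI[of _ E']) (simp add: Ag)
    qed
    from bchoice[OF this] obtain J where "\<forall>j\<in>K. \<exists>E. finite (J j) \<and> (\<forall>t\<in>J j. E t \<in> sets borel)
        \<and> A j = {\<omega>\<in>space M. \<forall>t\<in>J j. Z j \<omega> t \<in> E t}"
      ..
    from bchoice[OF this] obtain E where JE: "\<forall>j\<in>K. finite (J j) \<and> (\<forall>t\<in>J j. E j t \<in> sets borel)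
        \<and> A j = {\<omega>\<in>space M. \<forall>t\<in>J j. Z j \<omega> t \<in> E j t}"
      ..
    have "prob (\<Inter>j\<in>K. {\<omega>\<in>space M. \<forall>t\<in>J j. Z j \<omega> t \<in> E j t})
        = (\<Prod>j\<in>K. prob {\<omega>\<in>space M. \<forall>t\<in>J j. Z j \<omega> t \<in> E j t})"
      using K JE by (intro cylinders) auto
    moreover have "(\<Inter>j\<in>K. A j) = (\<Inter>j\<in>K. {\<omega>\<in>space M. \<forall>t\<in>J j. Z j \<omega> t \<in> E j t})"
      using JE by (intro INF_cong) auto
    moreover have "(\<Prod>j\<in>K. prob (A j)) = (\<Prod>j\<in>K. prob {\<omega>\<in>space M. \<forall>t\<in>J j. Z j \<omega> t \<in> E j t})"
      using JE by (intro prod.cong) auto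
    ultimately show "prob (\<Inter>j\<in>K. A j) = (\<Prod>j\<in>K. prob (A j))"
      by simp
  qed
  ultimately have "indep_sets (\<lambda>i. sigma_sets (space M) (F i)) I"
    by (intro indep_sets_sigma)
  then show ?thesis
    unfolding indep_vars_def2 using meas by (simp add: sigma_F)
qed

lemma grid_nonneg: "0 \<le> \<Delta> \<Longrightarrow> 0 \<le> grid \<Delta> i"
  by (simp add: grid_def)

lemma grid_mono: "0 \<le> \<Delta> \<Longrightarrow> i \<le> j \<Longrightarrow> grid \<Delta> i \<le> grid \<Delta> j"
  by (simp add: grid_def mult_right_mono)

lemma grid_diff: "1 \<le> i \<Longrightarrow> grid \<Delta> i - grid \<Delta> (i - 1) = \<Delta>"
  by (simp add: grid_def of_nat_diff algebra_simps)

definition cell_clamp :: "real \<Rightarrow> nat \<Rightarrow> real \<Rightarrow> real" where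
  "cell_clamp \<Delta> i t = max (grid \<Delta> (i - 1)) (min t (grid \<Delta> i))"

lemma cell_clamp_bounds:
  assumes "0 \<le> \<Delta>"
  shows "grid \<Delta> (i - 1) \<le> cell_clamp \<Delta> i t" "cell_clamp \<Delta> i t \<le> grid \<Delta> i"
  using grid_mono[OF assms, of "i - 1" i] by (auto simp: cell_clamp_def)

definition increment_path :: "real \<Rightarrow> (real \<Rightarrow> 'a \<Rightarrow> real) \<Rightarrow> nat \<Rightarrow> 'a \<Rightarrow> real \<Rightarrow> real" where
  "increment_path \<Delta> W i \<omega> = (\<lambda>t. W (cell_clamp \<Delta> i t) \<omega> - W (grid \<Delta> (i - 1)) \<omega>)"

lemma increment_path_measurable:
  assumes "wiener M W" "0 \<le> \<Delta>"
  shows "increment_path \<Delta> W i \<in> M \<rightarrow>\<^sub>M path_space"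
  unfolding increment_path_def
proof (rule measurable_PiM_single')
  fix t :: real
  have "0 \<le> cell_clamp \<Delta> i t"
    using cell_clamp_bounds(1)[OF assms(2)] grid_nonneg[OF assms(2)] by (rule order.trans[rotated])
  then show "(\<lambda>\<omega>. W (cell_clamp \<Delta> i t) \<omega> - W (grid \<Delta> (i - 1)) \<omega>) \<in> borel_measurable M"
    using assms by (intro borel_measurable_diff wiener_measurable grid_nonneg)
qed simp

lemma indep_increment_paths:
  assumes wien: "wiener M W" and "0 \<le> \<Delta>"
  shows "prob_space.indep_vars M (\<lambda>_. path_space) (increment_path \<Delta> W) I"
proof -
  interpret prob_space M
    using wien by (rule wiener_prob_space)
  show ?thesis
  proof (rule indep_vars_path_space_cylinders)
    fix i show "increment_path \<Delta> W i \<in> M \<rightarrow>\<^sub>M path_space"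
      using assms by (rule increment_path_measurable)
  next
    fix K :: "nat set" and J :: "nat \<Rightarrow> real set" and E :: "nat \<Rightarrow> real \<Rightarrow> real set"
    assume K: "finite K" "K \<noteq> {}" and "\<And>j. j \<in> K \<Longrightarrow> finite (J j)"
      and "\<And>j t. j \<in> K \<Longrightarrow> t \<in> J j \<Longrightarrow> E j t \<in> sets borel"
    moreover have "grid \<Delta> j \<le> grid \<Delta> (k - 1) \<or> grid \<Delta> k \<le> grid \<Delta> (j - 1)" if "j \<noteq> k" for j k
      using that grid_mono[OF \<open>0 \<le> \<Delta>\<close>, of j "k - 1"] grid_mono[OF \<open>0 \<le> \<Delta>\<close>, of k "j - 1"] by linarith
    ultimately show "prob (\<Inter>j\<in>K. {\<omega>\<in>space M. \<forall>t\<in>J j. increment_path \<Delta> W j \<omega> t \<in> E j t})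
        = (\<Prod>j\<in>K. prob {\<omega>\<in>space M. \<forall>t\<in>J j. increment_path \<Delta> W j \<omega> t \<in> E j t})"
      unfolding increment_path_def
      using cell_clamp_bounds[OF \<open>0 \<le> \<Delta>\<close>] grid_nonneg[OF \<open>0 \<le> \<Delta>\<close>]
      by (intro wiener_indep_interval_increments[OF wien K, where b = "grid \<Delta>"]) auto
  qed
qed

lemma cell_clamp_in_cell:
  "grid \<Delta> (i - 1) \<le> t \<Longrightarrow> t \<le> grid \<Delta> i \<Longrightarrow> cell_clamp \<Delta> i t = t"
  by (simp add: cell_clamp_def)

lemma cell_clamp_other_cell:
  assumes "0 \<le> \<Delta>" "j \<noteq> i" "1 \<le> i" "grid \<Delta> (i - 1) \<le> t" "t \<le> grid \<Delta> i"
  shows "cell_clamp \<Delta> j t = cell_clamp \<Delta> j (grid \<Delta> (i - 1))"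
proof (cases "j < i")
  case True
  then have "grid \<Delta> j \<le> grid \<Delta> (i - 1)"
    using assms(1) by (intro grid_mono) auto
  then show ?thesis
    using assms grid_mono[OF assms(1), of "j - 1" j] by (auto simp: cell_clamp_def)
next
  case False
  then have "grid \<Delta> i \<le> grid \<Delta> (j - 1)"
    using assms(1,2) by (intro grid_mono) auto
  then show ?thesis
    using assms grid_mono[OF assms(1), of "j - 1" j] by (auto simp: cell_clamp_def)
qed

lemma Xproc_increment_in_cell:
  assumes "0 \<le> \<Delta>" and i: "i \<in> {1..n}" and t: "grid \<Delta> (i - 1) \<le> t" "t \<le> grid \<Delta> i"
  shows "Xproc n \<Delta> X0 \<mu> \<sigma> W t \<omega> - Xproc n \<Delta> X0 \<mu> \<sigma> W (grid \<Delta> (i - 1)) \<omega>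
       = \<mu> i * (t - grid \<Delta> (i - 1)) + \<sigma> i * (W t \<omega> - W (grid \<Delta> (i - 1)) \<omega>)"
proof -
  define f where "f s j = \<mu> j * (cell_clamp \<Delta> j s - grid \<Delta> (j - 1))
      + \<sigma> j * (W (cell_clamp \<Delta> j s) \<omega> - W (grid \<Delta> (j - 1)) \<omega>)" for s j
  have Xproc_f: "Xproc n \<Delta> X0 \<mu> \<sigma> W s \<omega> = X0 + (\<Sum>j\<in>{1..n}. f s j)" for s
    by (simp add: Xproc_def f_def cell_clamp_def)
  have "grid \<Delta> (i - 1) \<le> grid \<Delta> i"
    using assms(1) by (rule grid_mono) simp
  then have "(\<Sum>j\<in>{1..n}. f t j - f (grid \<Delta> (i - 1)) j) = (\<Sum>j\<in>{1..n}. if j = i then f t i else 0)"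
    using assms cell_clamp_other_cell[OF assms(1) _ _ t] cell_clamp_in_cell[OF t]
      cell_clamp_in_cell[of \<Delta> i "grid \<Delta> (i - 1)"]
    by (intro sum.cong) (auto simp: f_def)
  also have "\<dots> = \<mu> i * (t - grid \<Delta> (i - 1)) + \<sigma> i * (W t \<omega> - W (grid \<Delta> (i - 1)) \<omega>)"
    using i cell_clamp_in_cell[OF t] by (simp add: f_def)
  finally show ?thesis
    by (simp add: Xproc_f sum_subtractf)
qed

lemma bridge_in_cell:
  assumes "0 < \<Delta>" "i \<in> {1..n}" "grid \<Delta> (i - 1) \<le> t" "t \<le> grid \<Delta> i"
  shows "bridge n \<Delta> X0 \<mu> \<sigma> W i t \<omega> = \<sigma> i *
      (increment_path \<Delta> W i \<omega> t - (t - grid \<Delta> (i - 1)) / \<Delta> * increment_path \<Delta> W i \<omega> (grid \<Delta> i))"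
proof -
  have "grid \<Delta> (i - 1) \<le> grid \<Delta> i"
    using assms(1) by (intro grid_mono) auto
  note incr = Xproc_increment_in_cell[OF less_imp_le[OF assms(1)] assms(2), of _ X0 \<mu> \<sigma> W \<omega>]
  have "grid \<Delta> i - grid \<Delta> (i - 1) = \<Delta>"
    using assms(2) by (intro grid_diff) simp
  then show ?thesis
    unfolding bridge_def incr[OF assms(3,4)] incr[OF \<open>grid \<Delta> (i - 1) \<le> grid \<Delta> i\<close> order.refl]
    using assms(1) cell_clamp_in_cell[OF assms(3,4)]
      cell_clamp_in_cell[OF \<open>grid \<Delta> (i - 1) \<le> grid \<Delta> i\<close> order.refl]
    by (simp add: increment_path_def field_simps)
qed

definition bridge_map :: "real \<Rightarrow> real \<Rightarrow> nat \<Rightarrow> (real \<Rightarrow> real) \<Rightarrow> real \<Rightarrow> real" where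
  "bridge_map s \<Delta> i z =
     (\<lambda>t. if t \<in> Sint \<Delta> i then s * (z t - (t - grid \<Delta> (i - 1)) / \<Delta> * z (grid \<Delta> i)) else 0)"

lemma bridge_map_measurable: "bridge_map s \<Delta> i \<in> path_space \<rightarrow>\<^sub>M path_space"
  unfolding bridge_map_def
proof (rule measurable_PiM_single')
  fix t :: real
  have "(\<lambda>z::real \<Rightarrow> real. z u) \<in> borel_measurable path_space" for u
    by (rule measurable_component_singleton) simp
  then show "(\<lambda>z. if t \<in> Sint \<Delta> i then s * (z t - (t - grid \<Delta> (i - 1)) / \<Delta> * z (grid \<Delta> i)) else 0)
      \<in> borel_measurable path_space"
    by simp
qed simp

lemma bridge_path_eq_bridge_map:
  assumes "0 < \<Delta>" "i \<in> {1..n}"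
  shows "bridge_path n \<Delta> X0 \<mu> \<sigma> W i \<omega> = bridge_map (\<sigma> i) \<Delta> i (increment_path \<Delta> W i \<omega>)"
proof
  fix t
  show "bridge_path n \<Delta> X0 \<mu> \<sigma> W i \<omega> t = bridge_map (\<sigma> i) \<Delta> i (increment_path \<Delta> W i \<omega>) t"
    using bridge_in_cell[OF assms, of t] by (auto simp: bridge_path_def bridge_map_def Sint_def)
qed

lemma spot_est_eq:
  assumes "0 < \<Delta>" "i \<in> {1..n}"
  shows "spot_est Dest n \<Delta> X0 \<mu> \<sigma> W i
       = (\<lambda>\<omega>. Dest (grid \<Delta> (i - 1)) (grid \<Delta> i) (bridge_map (\<sigma> i) \<Delta> i (increment_path \<Delta> W i \<omega>)))"
  by (intro ext) (simp add: spot_est_def bridge_path_eq_bridge_map[OF assms])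

lemma indep_spot_est:
  assumes wien: "wiener M W" and "0 < \<Delta>"
    and meas: "\<And>a b. Dest a b \<in> borel_measurable path_space"
  shows "prob_space.indep_vars M (\<lambda>_. borel) (spot_est Dest n \<Delta> X0 \<mu> \<sigma> W) {1..n}"
proof -
  interpret prob_space M
    using wien by (rule wiener_prob_space)
  have "indep_vars (\<lambda>_. borel)
      (\<lambda>i \<omega>. Dest (grid \<Delta> (i - 1)) (grid \<Delta> i) (bridge_map (\<sigma> i) \<Delta> i (increment_path \<Delta> W i \<omega>))) {1..n}"
    using indep_increment_paths[OF wien less_imp_le[OF \<open>0 < \<Delta>\<close>]]
    by (rule indep_vars_compose2) (intro measurable_compose[OF bridge_map_measurable meas])
  then show ?thesis
    by (rule indep_vars_cong[THEN iffD2, OF refl _ refl, rotated]) (simp add: spot_est_eq[OF \<open>0 < \<Delta>\<close>])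
qed

lemma (in prob_space) moments_of_scaled_distr:
  fixes X d :: "'a \<Rightarrow> real"
  assumes X: "X \<in> borel_measurable M" and d: "d \<in> borel_measurable M"
    and distr_eq: "distr M borel X = distr M borel (\<lambda>\<omega>. c * d \<omega>)"
    and d_sq: "integrable M (\<lambda>\<omega>. (d \<omega>)\<^sup>2)"
  shows "integrable M X" "integrable M (\<lambda>\<omega>. (X \<omega>)\<^sup>2)"
    "expect M X = c * expect M d" "var M X = c\<^sup>2 * var M d"
proof -
  have cd: "(\<lambda>\<omega>. c * d \<omega>) \<in> borel_measurable M"
    using d by simp
  have d_int: "integrable M d"
    using d d_sq by (rule square_integrable_imp_integrable)
  have integrable_eq: "integrable M (\<lambda>\<omega>. g (X \<omega>)) \<longleftrightarrow> integrable M (\<lambda>\<omega>. g (c * d \<omega>))"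
    if "g \<in> borel_measurable borel" for g :: "real \<Rightarrow> real"
    using integrable_distr_eq[OF X that] integrable_distr_eq[OF cd that] distr_eq by simp
  have integral_eq: "(\<integral>\<omega>. g (X \<omega>) \<partial>M) = (\<integral>\<omega>. g (c * d \<omega>) \<partial>M)"
    if "g \<in> borel_measurable borel" for g :: "real \<Rightarrow> real"
    using integral_distr[OF X that] integral_distr[OF cd that] distr_eq by simp
  show X_int: "integrable M X"
    using integrable_eq[of "\<lambda>x. x"] d_int by simp
  show X_sq: "integrable M (\<lambda>\<omega>. (X \<omega>)\<^sup>2)"
    using integrable_eq[of "\<lambda>x. x\<^sup>2"] d_sq by (simp add: power_mult_distrib)
  show E: "expect M X = c * expect M d"
    using integral_eq[of "\<lambda>x. x"] by (simp add: expect_def)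
  have "var M X = (\<integral>\<omega>. (X \<omega>)\<^sup>2 \<partial>M) - (expect M X)\<^sup>2"
    unfolding var_def expect_def by (rule variance_eq[OF X_int X_sq])
  also have "\<dots> = c\<^sup>2 * ((\<integral>\<omega>. (d \<omega>)\<^sup>2 \<partial>M) - (expect M d)\<^sup>2)"
    using integral_eq[of "\<lambda>x. x\<^sup>2"] E by (simp add: power_mult_distrib algebra_simps)
  also have "(\<integral>\<omega>. (d \<omega>)\<^sup>2 \<partial>M) - (expect M d)\<^sup>2 = var M d"
    unfolding var_def expect_def by (rule variance_eq[OF d_int d_sq, symmetric])
  finally show "var M X = c\<^sup>2 * var M d" .
qed

lemma (in prob_space) indep_var_centered_product:
  fixes X Y :: "'a \<Rightarrow> real"
  assumes "indep_var borel X borel Y" "integrable M X" "integrable M Y"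
  shows "integrable M (\<lambda>\<omega>. (X \<omega> - expect M X) * (Y \<omega> - expect M Y))"
    and "(\<integral>\<omega>. (X \<omega> - expect M X) * (Y \<omega> - expect M Y) \<partial>M) = 0"
proof -
  have "indep_var borel ((\<lambda>x. x - expect M X) \<circ> X) borel ((\<lambda>y. y - expect M Y) \<circ> Y)"
    using assms(1) by (rule indep_var_compose) simp_all
  then have indep: "indep_var borel (\<lambda>\<omega>. X \<omega> - expect M X) borel (\<lambda>\<omega>. Y \<omega> - expect M Y)"
    by (simp add: comp_def)
  have int: "integrable M (\<lambda>\<omega>. X \<omega> - expect M X)" "integrable M (\<lambda>\<omega>. Y \<omega> - expect M Y)"
    using assms(2,3) by simp_all
  show "integrable M (\<lambda>\<omega>. (X \<omega> - expect M X) * (Y \<omega> - expect M Y))"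
    using indep_var_integrable[OF indep int] .
  show "(\<integral>\<omega>. (X \<omega> - expect M X) * (Y \<omega> - expect M Y) \<partial>M) = 0"
    using indep_var_lebesgue_integral[OF indep int] assms(2)
    by (simp add: expect_def prob_space)
qed

lemma (in prob_space) var_sum_indep:
  fixes X :: "'i \<Rightarrow> 'a \<Rightarrow> real"
  assumes fin: "finite I" and indep: "indep_vars (\<lambda>_. borel) X I"
    and int: "\<And>i. i \<in> I \<Longrightarrow> integrable M (X i)"
    and sq_int: "\<And>i. i \<in> I \<Longrightarrow> integrable M (\<lambda>\<omega>. (X i \<omega>)\<^sup>2)"
  shows "var M (\<lambda>\<omega>. \<Sum>i\<in>I. X i \<omega>) = (\<Sum>i\<in>I. var M (X i))"
proof -
  define Y where "Y i \<omega> = X i \<omega> - expect M (X i)" for i \<omega>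
  have Y_prod: "integrable M (\<lambda>\<omega>. Y i \<omega> * Y j \<omega>) \<and>
      (\<integral>\<omega>. Y i \<omega> * Y j \<omega> \<partial>M) = (if i = j then var M (X i) else 0)" if "i \<in> I" "j \<in> I" for i j
  proof (cases "i = j")
    case True
    have "(\<lambda>\<omega>. Y i \<omega> * Y i \<omega>) = (\<lambda>\<omega>. (X i \<omega>)\<^sup>2 - 2 * expect M (X i) * X i \<omega> + (expect M (X i))\<^sup>2)"
      by (simp add: Y_def power2_eq_square algebra_simps)
    with True show ?thesis
      using int[OF that(1)] sq_int[OF that(1)] by (simp add: var_def Y_def power2_eq_square)
  next
    case False
    then have "indep_var borel (X i) borel (\<lambda>\<omega>. \<Sum>k\<in>{j}. X k \<omega>)"
      using that by (intro indep_vars_sum indep_vars_subset[OF indep]) auto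
    then have "indep_var borel (X i) borel (X j)"
      by simp
    with False show ?thesis
      using indep_var_centered_product int that by (simp add: Y_def)
  qed
  have "(\<Sum>i\<in>I. X i \<omega>) - expect M (\<lambda>\<omega>. \<Sum>i\<in>I. X i \<omega>) = (\<Sum>i\<in>I. Y i \<omega>)" for \<omega>
    using int by (simp add: expect_def Y_def sum_subtractf)
  then have "((\<Sum>i\<in>I. X i \<omega>) - expect M (\<lambda>\<omega>. \<Sum>i\<in>I. X i \<omega>))\<^sup>2
      = (\<Sum>i\<in>I. \<Sum>j\<in>I. Y i \<omega> * Y j \<omega>)" for \<omega>
    by (simp add: power2_eq_square sum_product)
  then have "var M (\<lambda>\<omega>. \<Sum>i\<in>I. X i \<omega>) = (\<Sum>i\<in>I. \<Sum>j\<in>I. \<integral>\<omega>. Y i \<omega> * Y j \<omega> \<partial>M)"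
    using Y_prod by (simp add: var_def)
  also have "\<dots> = (\<Sum>i\<in>I. \<Sum>j\<in>I. if i = j then var M (X i) else 0)"
    using Y_prod by (intro sum.cong) auto
  finally show ?thesis
    using fin by simp
qed

lemma (in prob_space) coef_var_indep_scaled_sum:
  fixes X :: "'i \<Rightarrow> 'a \<Rightarrow> real" and d :: "'a \<Rightarrow> real"
  assumes fin: "finite I" and indep: "indep_vars (\<lambda>_. borel) X I"
    and d: "d \<in> borel_measurable M" "integrable M (\<lambda>\<omega>. (d \<omega>)\<^sup>2)" "expect M d = 1"
    and distr_eq: "\<And>i. i \<in> I \<Longrightarrow> distr M borel (X i) = distr M borel (\<lambda>\<omega>. c i * d \<omega>)"
  shows "coef_var M (\<lambda>\<omega>. \<Sum>i\<in>I. X i \<omega>) = sqrt ((\<Sum>i\<in>I. (c i)\<^sup>2) * var M d) / (\<Sum>i\<in>I. c i)"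
proof -
  have X: "X i \<in> borel_measurable M" if "i \<in> I" for i
    using indep that by (simp add: indep_vars_def)
  note moments = moments_of_scaled_distr[OF X d(1) distr_eq d(2)]
  have "expect M (\<lambda>\<omega>. \<Sum>i\<in>I. X i \<omega>) = (\<Sum>i\<in>I. c i)"
    using moments(1,3) d(3) by (simp add: expect_def)
  moreover have "var M (\<lambda>\<omega>. \<Sum>i\<in>I. X i \<omega>) = (\<Sum>i\<in>I. (c i)\<^sup>2) * var M d"
    using var_sum_indep[OF fin indep moments(1,2)] moments(4) by (simp add: sum_distrib_right)
  ultimately show ?thesis
    by (simp add: coef_var_def)
qed

lemma sqrt_sum_squares_div_sum_ge:
  fixes c :: "'i \<Rightarrow> real"
  assumes "finite I" "I \<noteq> {}" "\<And>i. i \<in> I \<Longrightarrow> 0 < c i" "0 \<le> V"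
  shows "sqrt (V / card I) \<le> sqrt ((\<Sum>i\<in>I. (c i)\<^sup>2) * V) / (\<Sum>i\<in>I. c i)"
proof -
  have sum_pos: "0 < (\<Sum>i\<in>I. c i)"
    using assms by (intro sum_pos) auto
  have "(\<Sum>i\<in>I. c i)\<^sup>2 \<le> card I * (\<Sum>i\<in>I. (c i)\<^sup>2)"
    using Cauchy_Schwarz_ineq_sum[of "\<lambda>_. 1" c I] by simp
  then have "V * (\<Sum>i\<in>I. c i)\<^sup>2 \<le> V * (card I * (\<Sum>i\<in>I. (c i)\<^sup>2))"
    using assms(4) by (rule mult_left_mono)
  then have "V / card I \<le> (\<Sum>i\<in>I. (c i)\<^sup>2) * V / (\<Sum>i\<in>I. c i)\<^sup>2"
    using assms(1,2) sum_pos by (simp add: field_simps card_gt_0_iff)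
  then have "sqrt (V / card I) \<le> sqrt ((\<Sum>i\<in>I. (c i)\<^sup>2) * V / (\<Sum>i\<in>I. c i)\<^sup>2)"
    by (rule real_sqrt_le_mono)
  also have "\<dots> = sqrt ((\<Sum>i\<in>I. (c i)\<^sup>2) * V) / (\<Sum>i\<in>I. c i)"
    using sum_pos by (simp add: real_sqrt_divide)
  finally show ?thesis .
qed

lemma sqrt_sum_squares_div_sum_const:
  fixes c V :: real
  assumes "finite I" "I \<noteq> {}" "0 < c"
  shows "sqrt ((\<Sum>i\<in>I. c\<^sup>2) * V) / (\<Sum>i\<in>I. c) = sqrt (V / card I)"
proof -
  have pos: "0 < card I * c"
    using assms by (simp add: card_gt_0_iff)
  have "card I * c\<^sup>2 * V / (card I * c)\<^sup>2 = V / card I"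
    using pos assms(3) by (simp add: field_simps power2_eq_square)
  moreover have "sqrt (card I * c\<^sup>2 * V / (card I * c)\<^sup>2) = sqrt (card I * c\<^sup>2 * V) / (card I * c)"
    using pos by (simp add: real_sqrt_divide)
  ultimately show ?thesis
    by simp
qed

lemma canon_bridge_path_measurable:
  assumes "wiener M W"
  shows "canon_bridge_path W \<in> M \<rightarrow>\<^sub>M path_space"
  unfolding canon_bridge_path_def
proof (rule measurable_PiM_single')
  fix t :: real
  show "(\<lambda>\<omega>. if t \<in> {0<..1} then W t \<omega> - t * W 1 \<omega> else 0) \<in> borel_measurable M"
    using wiener_measurable[OF assms, of t] wiener_measurable[OF assms, of 1]
    by (cases "t \<in> {0<..1}") auto
qed simp

lemma coef_var_total_est:
  assumes wien: "wiener M W" and "0 < \<Delta>"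
    and meas: "\<And>a b. Dest a b \<in> borel_measurable path_space"
    and homog: "\<And>i. i \<in> {1..n} \<Longrightarrow> distr M borel (spot_est Dest n \<Delta> X0 \<mu> \<sigma> W i)
        = distr M borel (\<lambda>\<omega>. (\<sigma> i)\<^sup>2 * \<Delta> * canon_est Dest W \<omega>)"
    and unbiased: "expect M (canon_est Dest W) = 1"
    and finvar: "integrable M (\<lambda>\<omega>. (canon_est Dest W \<omega>)\<^sup>2)"
  shows "coef_var M (total_est Dest n \<Delta> X0 \<mu> \<sigma> W)
       = sqrt ((\<Sum>i\<in>{1..n}. ((\<sigma> i)\<^sup>2 * \<Delta>)\<^sup>2) * var M (canon_est Dest W))
         / (\<Sum>i\<in>{1..n}. (\<sigma> i)\<^sup>2 * \<Delta>)"
proof -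
  interpret prob_space M
    using wien by (rule wiener_prob_space)
  have "canon_est Dest W \<in> borel_measurable M"
    unfolding canon_est_def[abs_def]
    by (rule measurable_compose[OF canon_bridge_path_measurable[OF wien] meas])
  then show ?thesis
    unfolding total_est_def[abs_def]
    using homog unbiased finvar indep_spot_est[OF wien \<open>0 < \<Delta>\<close> meas]
    by (intro coef_var_indep_scaled_sum) auto
qed

theorem theorem2:
  fixes M :: "'a measure" and W :: "real \<Rightarrow> 'a \<Rightarrow> real"
    and T X0 :: real and n :: nat and \<mu> :: "nat \<Rightarrow> real"
    and Dest :: "real \<Rightarrow> real \<Rightarrow> (real \<Rightarrow> real) \<Rightarrow> real"
  assumes "wiener M W"
    and "T > 0" and "n \<ge> 1"
    and meas: "\<And>a b. Dest a b \<in> borel_measurable path_space"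
    and homog: "\<And>\<sigma> i. (\<forall>j\<in>{1..n}. \<sigma> j > 0) \<Longrightarrow> i \<in> {1..n} \<Longrightarrow>
        distr M borel (spot_est Dest n (T / real n) X0 \<mu> \<sigma> W i)
          = distr M borel (\<lambda>\<omega>. (\<sigma> i)\<^sup>2 * (T / real n) * canon_est Dest W \<omega>)"
    and unbiased: "expect M (canon_est Dest W) = 1"
    and finvar: "integrable M (\<lambda>\<omega>. (canon_est Dest W \<omega>)\<^sup>2)"
  shows "(INF \<sigma>\<in>{\<sigma> :: nat \<Rightarrow> real. \<forall>j\<in>{1..n}. \<sigma> j > 0}.
            coef_var M (total_est Dest n (T / real n) X0 \<mu> \<sigma> W))
         = sqrt (var M (canon_est Dest W) / real n)"
proof -
  define \<Delta> where "\<Delta> = T / real n"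
  define V where "V = var M (canon_est Dest W)"
  define \<rho> where "\<rho> \<sigma> = coef_var M (total_est Dest n \<Delta> X0 \<mu> \<sigma> W)" for \<sigma>
  have "0 < \<Delta>"
    using assms(2,3) by (simp add: \<Delta>_def)
  have "0 \<le> V"
    unfolding V_def var_def by simp
  have \<rho>_eq: "\<rho> \<sigma> = sqrt ((\<Sum>i\<in>{1..n}. ((\<sigma> i)\<^sup>2 * \<Delta>)\<^sup>2) * V) / (\<Sum>i\<in>{1..n}. (\<sigma> i)\<^sup>2 * \<Delta>)"
    if "\<forall>j\<in>{1..n}. \<sigma> j > 0" for \<sigma>
    unfolding \<rho>_def V_def
    using homog[OF that] \<Delta>_def by (intro coef_var_total_est[OF assms(1) \<open>0 < \<Delta>\<close> meas _ unbiased finvar]) auto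
  have "\<rho> (\<lambda>_. 1) = sqrt (V / real n)"
    using \<rho>_eq[of "\<lambda>_. 1"] sqrt_sum_squares_div_sum_const[of "{1..n}" \<Delta> V] \<open>0 < \<Delta>\<close> assms(3) by simp
  moreover have "sqrt (V / real n) \<le> \<rho> \<sigma>" if "\<forall>j\<in>{1..n}. \<sigma> j > 0" for \<sigma>
  proof -
    have "0 < (\<sigma> i)\<^sup>2 * \<Delta>" if "i \<in> {1..n}" for i
      using bspec[OF \<open>\<forall>j\<in>{1..n}. \<sigma> j > 0\<close> that] \<open>0 < \<Delta>\<close> by simp
    then show ?thesis
      using sqrt_sum_squares_div_sum_ge[of "{1..n}" "\<lambda>i. (\<sigma> i)\<^sup>2 * \<Delta>" V] \<rho>_eq[OF that]
        \<open>0 \<le> V\<close> assms(3) by simp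
  qed
  ultimately have "(INF \<sigma>\<in>{\<sigma>. \<forall>j\<in>{1..n}. \<sigma> j > 0}. \<rho> \<sigma>) = sqrt (V / real n)"
    by (intro cInf_eq_minimum) (auto intro!: rev_image_eqI[of "\<lambda>_. 1"])
  then show ?thesis
    by (simp add: \<rho>_def \<Delta>_def V_def)
qed

end
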